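(* For every $k\ge0$, $F_k$ equals the $(I_0,I_0)$ entry of the matrix $\mathbf T^k$, where $I_0=[0,a-1]$.
   Context: Let $S$ be a finite set of integers with $a:=\max S\ge 1$ and $b:=-\min S\ge 1$. Each $s\in S$ carries a weight $\omega_s$ in a field $K$ of characteristic $0$; set $\omega_s:=0$ for $s\in\mathbb Z\setminus S$, and for $s\in\mathbb Z$ put $\beta_s:=\delta_{s,0}-\omega_s$. For $k\ge0$, $A_k$ is the $(k+1)\times(k+1)$ matrix with rows and columns indexed by $0,\dots,k$ whose $(i,j)$ entry is $\omega_{j-i}$. Put $F_0:=1$ and $F_k:=\det(1-A_{k-1})$ for $k\ge1$. Notation: $[m,n]:=\{i\in\mathbb Z: m\le i\le n\}$, $X+c:=\{x+c:x\in X\}$; an $n$-subset is a subset of cardinality $n$. For a finite set $I\subseteq\mathbb Z$ and $s\in\mathbb Z$, $\epsilon_s(I):=(-1)^{\#\{i\in I:\ i<s\}}$. $\mathbf T$ is the square matrix with rows and columns indexed by the $a$-subsets of $[-b,a-1]$ and entries $\mathbf T[I,J]:=\epsilon_s(I)\beta_s$ if there is an integer $s$ with $I\cup\{a\}=(J+1)\cup\{s\}$ (such $s$ is then unique), and $\mathbf T[I,J]:=0$ otherwise. *)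

theory Defs
  imports "Jordan_Normal_Form.Determinant"
begin

definition beta :: "(int \<Rightarrow> 'a::field_char_0) \<Rightarrow> int \<Rightarrow> 'a" where
  "beta \<omega> s = (if s = 0 then 1 else 0) - \<omega> s"

definition Amat :: "(int \<Rightarrow> 'a::field_char_0) \<Rightarrow> nat \<Rightarrow> 'a mat" where
  "Amat \<omega> k = mat (k+1) (k+1) (\<lambda>(i,j). \<omega> (int j - int i))"

definition Fseq :: "(int \<Rightarrow> 'a::field_char_0) \<Rightarrow> nat \<Rightarrow> 'a" where
  "Fseq \<omega> k = (if k = 0 then 1 else det (1\<^sub>m k - Amat \<omega> (k - 1)))"

definition eps :: "int \<Rightarrow> int set \<Rightarrow> 'a::field_char_0" where
  "eps s I = (-1) ^ card {i \<in> I. i < s}"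

definition shift :: "int set \<Rightarrow> int \<Rightarrow> int set" where
  "shift X c = (\<lambda>x. x + c) ` X"

definition Tidx :: "int \<Rightarrow> int \<Rightarrow> int set set" where
  "Tidx a b = {I. I \<subseteq> {-b..a-1} \<and> card I = nat a}"

definition Tmat :: "(int \<Rightarrow> 'a::field_char_0) \<Rightarrow> int \<Rightarrow> int set \<Rightarrow> int set \<Rightarrow> 'a" where
  "Tmat \<omega> a I J =
     (if \<exists>s. insert a I = insert s (shift J 1)
      then (let s = (THE s. insert a I = insert s (shift J 1)) in eps s I * beta \<omega> s)
      else 0)"

fun matpow :: "'i set \<Rightarrow> ('i \<Rightarrow> 'i \<Rightarrow> 'a::comm_semiring_1) \<Rightarrow> nat \<Rightarrow> 'i \<Rightarrow> 'i \<Rightarrow> 'a" where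
  "matpow D M 0 I J = (if I = J then 1 else 0)"
| "matpow D M (Suc k) I J = (\<Sum>L\<in>D. matpow D M k I L * M L J)"

end

theory Submission
  imports Defs
begin

(* Write C_k(J) = [0, k + a - 1] - (J + k). By induction on k, the entry T^k[I_0, J] is, up to the
   sign (-1)^(sum C_k(J) + k(k-1)/2), the determinant of the k x k minor of the Toeplitz matrix
   (beta_(c-i)) with rows 0, ..., k-1 and columns C_k(J), and it vanishes when |C_k(J)| <> k.
   For the inductive step expand the (k+1)-minor along its last row: the column c corresponds to
   the unique L with L + {a} = (J + 1) + {c - k}, for which C_k(L) = C_(k+1)(J) - {c} and
   T[L, J] = eps_(c-k)(L) beta_(c-k); the Laplace sign and eps together account for the change
   of the normalising sign. A column without such an L contributes nothing, because then either
   beta_(c-k) = 0 or the remaining minor has the zero column k + a. Finally C_k(I_0) = [0, k-1],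
   whose sign is 1 and whose minor is 1 - A_(k-1). *)

lemma card_less_sorted_list_of_set_nth:
  fixes C :: "'a::linorder set"
  assumes "finite C" and "j < card C"
  shows "card {x \<in> C. x < sorted_list_of_set C ! j} = j"
proof -
  let ?xs = "sorted_list_of_set C"
  have sorted: "sorted_wrt (<) ?xs" and len: "length ?xs = card C"
    using assms(1) by auto
  have "{x \<in> C. x < ?xs ! j} = nth ?xs ` {..<j}"
  proof (intro equalityI subsetI)
    fix x assume x: "x \<in> {x \<in> C. x < ?xs ! j}"
    then have "x \<in> set ?xs" using assms(1) by simp
    then obtain i where i: "i < card C" "?xs ! i = x" by (auto simp: in_set_conv_nth len)
    have "i < j"
      using sorted_wrt_nth_less[OF sorted, of j i] i x len assms(2)
      by (cases "i < j") (auto simp: not_less nat_less_le)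
    then show "x \<in> nth ?xs ` {..<j}" using i by auto
  next
    fix x assume "x \<in> nth ?xs ` {..<j}"
    then show "x \<in> {x \<in> C. x < ?xs ! j}"
      using sorted_wrt_nth_less[OF sorted] len assms nth_mem[of _ ?xs] by auto
  qed
  moreover have "inj_on (nth ?xs) {..<j}"
    using assms len by (intro inj_on_nth) auto
  ultimately show ?thesis by (simp add: card_image)
qed

lemma sorted_list_of_set_remove_nth:
  fixes C :: "'a::linorder set"
  assumes "finite C" and "j < card C" and "r < card C - 1"
  shows "sorted_list_of_set (C - {sorted_list_of_set C ! j}) ! r
         = sorted_list_of_set C ! insert_index j r"
proof -
  define xs where "xs = sorted_list_of_set C"
  have dist: "distinct xs" and len: "length xs = card C"
    using assms(1) by (auto simp: xs_def)
  have split: "xs = take j xs @ xs ! j # drop (Suc j) xs"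
    using assms(2) len by (simp add: id_take_nth_drop)
  then have "xs ! j \<notin> set (take j xs)"
    using dist by (metis distinct_append disjoint_iff list.set_intros(1))
  then have "remove1 (xs ! j) xs = take j xs @ drop (Suc j) xs"
    by (subst split) (simp add: remove1_append)
  moreover have "sorted_list_of_set (C - {xs ! j}) = remove1 (xs ! j) xs"
    using assms(1) by (simp add: sorted_list_of_set_remove xs_def)
  ultimately show ?thesis
    using assms(2,3) len unfolding xs_def[symmetric] insert_index_def
    by (auto simp: nth_append min_def)
qed

lemma sum_sorted_list_of_set_nth:
  fixes C :: "'a::linorder set"
  assumes "finite C"
  shows "(\<Sum>j<card C. g (sorted_list_of_set C ! j)) = sum g C"
proof -
  have "(\<Sum>j<card C. g (sorted_list_of_set C ! j))
        = sum g (nth (sorted_list_of_set C) ` {..<card C})"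
    using assms by (subst sum.reindex) (auto intro!: inj_on_nth)
  also have "nth (sorted_list_of_set C) ` {..<card C} = C"
    using assms by (metis atLeast_upt length_sorted_list_of_set set_map map_nth set_sorted_list_of_set)
  finally show ?thesis .
qed

definition toeplitz_minor :: "(int \<Rightarrow> 'a::comm_ring_1) \<Rightarrow> nat \<Rightarrow> int set \<Rightarrow> 'a mat" where
  "toeplitz_minor f k C = mat k k (\<lambda>(i, j). f (sorted_list_of_set C ! j - int i))"

definition toeplitz_minor_det :: "(int \<Rightarrow> 'a::comm_ring_1) \<Rightarrow> nat \<Rightarrow> int set \<Rightarrow> 'a" where
  "toeplitz_minor_det f k C = (if card C = k then det (toeplitz_minor f k C) else 0)"

lemma toeplitz_minor_carrier [simp]: "toeplitz_minor f k C \<in> carrier_mat k k"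
  by (simp add: toeplitz_minor_def)

lemma toeplitz_minor_delete_last_row:
  assumes "finite C" and "card C = Suc k" and "j < Suc k"
  shows "mat_delete (toeplitz_minor f (Suc k) C) k j
         = toeplitz_minor f k (C - {sorted_list_of_set C ! j})"
proof (rule eq_matI)
  fix i' j' assume "i' < dim_row (toeplitz_minor f k (C - {sorted_list_of_set C ! j}))"
    and "j' < dim_col (toeplitz_minor f k (C - {sorted_list_of_set C ! j}))"
  then have "i' < k" and "j' < k" by (auto simp: toeplitz_minor_def)
  moreover have "sorted_list_of_set (C - {sorted_list_of_set C ! j}) ! j'
                 = sorted_list_of_set C ! insert_index j j'"
    by (rule sorted_list_of_set_remove_nth) (use assms \<open>j' < k\<close> in auto)
  ultimately show "mat_delete (toeplitz_minor f (Suc k) C) k j $$ (i', j')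
                   = toeplitz_minor f k (C - {sorted_list_of_set C ! j}) $$ (i', j')"
    by (simp add: mat_delete_def toeplitz_minor_def insert_index_def)
qed (auto simp: toeplitz_minor_def mat_delete_def)

lemma det_toeplitz_minor_Suc:
  assumes "finite C" and "card C = Suc k"
  shows "det (toeplitz_minor f (Suc k) C)
         = (\<Sum>c\<in>C. f (c - int k) * (-1) ^ (k + card {y \<in> C. y < c})
                     * det (toeplitz_minor f k (C - {c})))"
proof -
  let ?M = "toeplitz_minor f (Suc k) C" and ?xs = "sorted_list_of_set C"
  define g where
    "g c = f (c - int k) * (-1) ^ (k + card {y \<in> C. y < c}) * det (toeplitz_minor f k (C - {c}))"
    for c
  have "det ?M = (\<Sum>j<Suc k. ?M $$ (k, j) * cofactor ?M k j)"
    by (rule laplace_expansion_row) auto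
  also have "\<dots> = (\<Sum>j<card C. g (?xs ! j))"
    using assms by (intro sum.cong)
      (auto simp: g_def cofactor_def toeplitz_minor_delete_last_row card_less_sorted_list_of_set_nth,
       auto simp: toeplitz_minor_def add.commute)
  also have "\<dots> = sum g C"
    using assms(1) by (rule sum_sorted_list_of_set_nth)
  finally show ?thesis unfolding g_def .
qed

lemma det_toeplitz_minor_zero_column:
  assumes "finite C" and "card C = k" and "c \<in> C" and "\<And>i. i < k \<Longrightarrow> f (c - int i) = 0"
  shows "det (toeplitz_minor f k C) = 0"
proof -
  have "c \<in> set (sorted_list_of_set C)" using assms(1,3) by simp
  then obtain j where j: "j < k" "sorted_list_of_set C ! j = c"
    using assms(1,2) by (metis in_set_conv_nth length_sorted_list_of_set)
  have "det (toeplitz_minor f k C)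
        = (\<Sum>i<k. toeplitz_minor f k C $$ (i, j) * cofactor (toeplitz_minor f k C) i j)"
    by (rule laplace_expansion_column) (use j in auto)
  also have "\<dots> = 0"
    using j assms(4) by (intro sum.neutral) (auto simp: toeplitz_minor_def)
  finally show ?thesis .
qed

lemma Fseq_eq_toeplitz_minor_det: "Fseq \<omega> k = toeplitz_minor_det (beta \<omega>) k {0..<int k}"
proof -
  have "sorted_list_of_set {0..<int k} ! j = int j" if "j < k" for j
  proof -
    have "{0..<int k} = {0..int k - 1}" by auto
    then show ?thesis using that by simp
  qed
  then have "toeplitz_minor (beta \<omega>) k {0..<int k} = mat k k (\<lambda>(i, j). beta \<omega> (int j - int i))"
    by (intro eq_matI) (auto simp: toeplitz_minor_def)
  moreover have "k \<noteq> 0 \<Longrightarrow> 1\<^sub>m k - Amat \<omega> (k - 1) = mat k k (\<lambda>(i, j). beta \<omega> (int j - int i))"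
    by (intro eq_matI) (auto simp: Amat_def beta_def)
  ultimately show ?thesis
    by (cases "k = 0") (auto simp: Fseq_def toeplitz_minor_det_def toeplitz_minor_def)
qed

definition parity_sign :: "int \<Rightarrow> 'a::ring_1" where
  "parity_sign x = (if even x then 1 else - 1)"

lemma parity_sign_add: "parity_sign (x + y) = parity_sign x * parity_sign y"
  by (auto simp: parity_sign_def)

lemma parity_sign_cong: "even (x - y) \<Longrightarrow> parity_sign x = parity_sign y"
  by (auto simp: parity_sign_def)

lemma minus_one_power_eq_parity_sign: "(- 1) ^ n = parity_sign (int n)"
  by (auto simp: parity_sign_def)

definition minor_sign :: "nat \<Rightarrow> int set \<Rightarrow> 'a::ring_1" where
  "minor_sign k C = parity_sign (\<Sum>C + (\<Sum>i<k. int i))"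

lemma minor_sign_interval: "minor_sign k {0..<int k} = 1"
proof -
  have "{0..<int k} = int ` {..<k}"
    by (simp add: image_int_atLeastLessThan lessThan_atLeast0)
  then have "\<Sum>{0..<int k} = (\<Sum>i<k. int i)"
    by (simp add: sum.reindex)
  then show ?thesis by (simp add: minor_sign_def parity_sign_def)
qed

definition free_cols :: "int \<Rightarrow> nat \<Rightarrow> int set \<Rightarrow> int set" where
  "free_cols a k J = {0..int k + a - 1} - shift J (int k)"

lemma shift_mem_iff [simp]: "x \<in> shift X c \<longleftrightarrow> x - c \<in> X"
  by (force simp: shift_def image_iff)

lemma card_shift [simp]: "card (shift X c) = card X"
  unfolding shift_def by (rule card_image) (simp add: inj_on_def)

lemma finite_shift [simp]: "finite (shift X c) \<longleftrightarrow> finite X"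
  unfolding shift_def by (rule finite_image_iff) (simp add: inj_on_def)

lemma finite_free_cols [simp]: "finite (free_cols a k J)"
  by (simp add: free_cols_def)

lemma finite_Tidx: "finite (Tidx a b)"
  by (rule finite_subset[of _ "Pow {-b..a-1}"]) (auto simp: Tidx_def)

lemma Tidx_memberD:
  assumes "L \<in> Tidx a b"
  shows "finite L" and "card L = nat a" and "\<And>x. x \<in> L \<Longrightarrow> -b \<le> x \<and> x \<le> a - 1"
  using assms by (auto simp: Tidx_def intro: finite_subset)

locale banded_weights =
  fixes \<omega> :: "int \<Rightarrow> 'a::field_char_0" and a b :: int
  assumes a_pos: "1 \<le> a" and b_pos: "1 \<le> b"
    and weight_vanishes: "\<And>s. s < -b \<or> a < s \<Longrightarrow> \<omega> s = 0"
begin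

lemma beta_vanishes: "s < -b \<or> a < s \<Longrightarrow> beta \<omega> s = 0"
  using a_pos b_pos weight_vanishes[of s] by (auto simp: beta_def)

lemma card_free_cols_iff:
  assumes L: "L \<in> Tidx a b"
  shows "card (free_cols a k L) = k \<longleftrightarrow> (\<forall>x\<in>L. - int k \<le> x)"
proof -
  define A where "A = {0..int k + a - 1}"
  define B where "B = shift L (int k)"
  have fin: "finite A" "finite B" and card_A: "card A = k + nat a" and card_B: "card B = nat a"
    using Tidx_memberD[OF L] a_pos by (auto simp: A_def B_def)
  have card_free: "card (free_cols a k L) = card A - card (A \<inter> B)"
    unfolding free_cols_def A_def[symmetric] B_def[symmetric]
    by (rule card_Diff_subset_Int) (simp add: fin)
  have "B \<subseteq> A \<longleftrightarrow> (\<forall>x\<in>L. - int k \<le> x)"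
  proof
    assume BA: "B \<subseteq> A"
    show "\<forall>x\<in>L. - int k \<le> x"
    proof
      fix x assume "x \<in> L"
      then have "x + int k \<in> A" using BA by (auto simp: B_def)
      then show "- int k \<le> x" by (simp add: A_def)
    qed
  next
    assume above: "\<forall>x\<in>L. - int k \<le> x"
    show "B \<subseteq> A"
    proof
      fix y assume "y \<in> B"
      then have "y - int k \<in> L" by (simp add: B_def)
      then show "y \<in> A"
        using above Tidx_memberD(3)[OF L] by (fastforce simp: A_def)
    qed
  qed
  moreover have "card (A \<inter> B) = card B \<longleftrightarrow> B \<subseteq> A"
    using fin card_subset_eq[of B "A \<inter> B"] by (auto simp: Int_absorb1)
  moreover have "card (A \<inter> B) \<le> card B"
    using fin by (simp add: card_mono)
  ultimately show ?thesis
    using card_free card_A card_B by auto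
qed

lemma Tidx_not_mem_a: "L \<in> Tidx a b \<Longrightarrow> a \<notin> L"
  using Tidx_memberD(3) by force

lemma transition_not_mem_shift:
  assumes J: "J \<in> Tidx a b" and L: "L \<in> Tidx a b" and H: "insert a L = insert s (shift J 1)"
  shows "s \<notin> shift J 1"
proof
  assume "s \<in> shift J 1"
  then have "card (insert a L) = card (shift J 1)" using H by (simp add: insert_absorb)
  then show False
    using Tidx_not_mem_a[OF L] Tidx_memberD[OF L] Tidx_memberD[OF J] by simp
qed

context
  fixes J L :: "int set" and s :: int
  assumes J: "J \<in> Tidx a b" and L: "L \<in> Tidx a b"
    and transition: "insert a L = insert s (shift J 1)"
begin

lemma transition_mem_iff: "y = a \<or> y \<in> L \<longleftrightarrow> y = s \<or> y - 1 \<in> J"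
  using transition by (metis insert_iff shift_mem_iff)

lemma transition_index_bounds: "-b \<le> s \<and> s \<le> a"
  using transition_mem_iff[of s] Tidx_memberD(3)[OF L] a_pos b_pos by force

lemma transition_index_unique: "(THE s'. insert a L = insert s' (shift J 1)) = s"
proof (rule the_equality)
  fix s' assume H': "insert a L = insert s' (shift J 1)"
  then have "s' \<in> insert s (shift J 1)" using transition by auto
  then show "s' = s" using transition_not_mem_shift[OF J L H'] by auto
qed (rule transition)

lemma Tmat_transition: "Tmat \<omega> a L J = eps s L * beta \<omega> s"
  unfolding Tmat_def using transition transition_index_unique by (auto simp: Let_def)

lemma free_cols_Suc_remove: "free_cols a (Suc k) J - {int k + s} = free_cols a k L"
proof (rule Set.set_eqI)
  fix x
  have "x - int k = a \<or> x - int k \<in> L \<longleftrightarrow> x - int k = s \<or> x - int (Suc k) \<in> J"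
    using transition_mem_iff[of "x - int k"] by (simp add: algebra_simps)
  then show "x \<in> free_cols a (Suc k) J - {int k + s} \<longleftrightarrow> x \<in> free_cols a k L"
    by (auto simp: free_cols_def)
qed

context
  fixes k :: nat
  assumes above: "\<forall>x\<in>L. - int k \<le> x"
begin

lemma transition_col_nonneg: "0 \<le> int k + s"
  using transition_mem_iff[of s] above a_pos by auto

lemma transition_col_mem: "int k + s \<in> free_cols a (Suc k) J"
  using transition_not_mem_shift[OF J L transition] transition_index_bounds transition_col_nonneg
  by (auto simp: free_cols_def)

text \<open>The free columns of \<open>J\<close> below the column \<open>k + s\<close> and the elements of \<open>L\<close> below \<open>s\<close>,
  shifted by \<open>k\<close>, partition \<open>[0, k + s - 1]\<close>.\<close>
lemma card_less_transition_col:
  "int (card {x \<in> free_cols a (Suc k) J. x < int k + s}) + int (card {x \<in> L. x < s}) = int k + s"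
proof -
  define A1 where "A1 = {x \<in> free_cols a (Suc k) J. x < int k + s}"
  define A2 where "A2 = shift {x \<in> L. x < s} (int k)"
  have m: "x - int k = a \<or> x - int k \<in> L \<longleftrightarrow> x - int k = s \<or> x - int (Suc k) \<in> J" for x
    using transition_mem_iff[of "x - int k"] by (simp add: algebra_simps)
  have "A1 \<union> A2 = {0..<int k + s}"
  proof (rule Set.set_eqI)
    fix x
    show "x \<in> A1 \<union> A2 \<longleftrightarrow> x \<in> {0..<int k + s}"
      unfolding A1_def A2_def free_cols_def using m[of x] above transition_index_bounds by force
  qed
  moreover have "A1 \<inter> A2 = {}"
    unfolding A1_def A2_def free_cols_def using m above transition_index_bounds by force
  moreover have "finite A1" and "finite A2"
    using Tidx_memberD(1)[OF L] by (auto simp: A1_def A2_def)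
  ultimately have "card A1 + card A2 = nat (int k + s)"
    by (metis card_Un_disjoint card_atLeastLessThan_int diff_zero)
  moreover have "card A2 = card {x \<in> L. x < s}"
    by (simp add: A2_def)
  ultimately show ?thesis
    using transition_col_nonneg unfolding A1_def by linarith
qed

lemma minor_sign_transition:
  "minor_sign (Suc k) (free_cols a (Suc k) J)
     * (- 1) ^ (k + card {y \<in> free_cols a (Suc k) J. y < int k + s})
   = minor_sign k (free_cols a k L) * (eps s L :: 'a)"
proof -
  let ?C = "free_cols a (Suc k) J" and ?c = "int k + s"
  define n1 where "n1 = card {y \<in> ?C. y < ?c}"
  define n2 where "n2 = card {x \<in> L. x < s}"
  have sum_C: "\<Sum>?C = ?c + \<Sum>(free_cols a k L)"
    using sum.remove[OF finite_free_cols transition_col_mem, of id] free_cols_Suc_remove[of k]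
    by simp
  have "minor_sign (Suc k) ?C * (- 1) ^ (k + n1)
        = (parity_sign (\<Sum>?C + (\<Sum>i<Suc k. int i) + int (k + n1)) :: 'a)"
    by (simp only: minor_sign_def minus_one_power_eq_parity_sign parity_sign_add)
  also have "\<dots> = parity_sign (\<Sum>(free_cols a k L) + (\<Sum>i<k. int i) + int n2)"
  proof (rule parity_sign_cong)
    have "int n1 + int n2 = ?c"
      using card_less_transition_col by (simp add: n1_def n2_def)
    then have diff:
      "\<Sum>?C + (\<Sum>i<Suc k. int i) + int (k + n1) - (\<Sum>(free_cols a k L) + (\<Sum>i<k. int i) + int n2)
       = 2 * (?c + int k - int n2)"
      using sum_C by simp
    then show
      "even (\<Sum>?C + (\<Sum>i<Suc k. int i) + int (k + n1)
             - (\<Sum>(free_cols a k L) + (\<Sum>i<k. int i) + int n2))"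
      unfolding diff by simp
  qed
  also have "\<dots> = minor_sign k (free_cols a k L) * eps s L"
    by (simp only: minor_sign_def eps_def minus_one_power_eq_parity_sign parity_sign_add n2_def)
  finally show ?thesis unfolding n1_def .
qed

lemma transition_term_eq_laplace_term:
  "minor_sign k (free_cols a k L) * toeplitz_minor_det (beta \<omega>) k (free_cols a k L) * Tmat \<omega> a L J
   = minor_sign (Suc k) (free_cols a (Suc k) J)
     * (beta \<omega> (int k + s - int k) * (- 1) ^ (k + card {y \<in> free_cols a (Suc k) J. y < int k + s})
        * det (toeplitz_minor (beta \<omega>) k (free_cols a (Suc k) J - {int k + s})))"
  using card_free_cols_iff[OF L, of k] above minor_sign_transition
  by (simp add: toeplitz_minor_det_def Tmat_transition free_cols_Suc_remove mult_ac)

end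

end

lemma Tmat_nonzero_transition:
  assumes "Tmat \<omega> a L J \<noteq> 0"
  obtains s where "insert a L = insert s (shift J 1)"
  using assms by (auto simp: Tmat_def split: if_splits)

lemma transition_from_free_col:
  assumes J: "J \<in> Tidx a b" and card_C: "card (free_cols a (Suc k) J) = Suc k"
    and c: "c \<in> free_cols a (Suc k) J" and beta_c: "beta \<omega> (c - int k) \<noteq> 0"
    and det_c: "det (toeplitz_minor (beta \<omega>) k (free_cols a (Suc k) J - {c})) \<noteq> 0"
  defines "L \<equiv> insert (c - int k) (shift J 1) - {a}"
  shows "L \<in> Tidx a b" and "insert a L = insert (c - int k) (shift J 1)"
    and "\<forall>x\<in>L. - int k \<le> x"
proof -
  define s where "s = c - int k"
  let ?C = "free_cols a (Suc k) J"
  have s: "0 \<le> int k + s" "s \<le> a" "s - 1 \<notin> J"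
    using c by (auto simp: s_def free_cols_def algebra_simps)
  have "-b \<le> s" using beta_vanishes[of s] beta_c by (force simp: s_def)
  have a_mem: "a \<in> insert s (shift J 1)"
  proof (rule ccontr)
    assume "a \<notin> insert s (shift J 1)"
    then have "int k + a \<in> ?C - {c}" using a_pos by (auto simp: free_cols_def s_def)
    moreover have "card (?C - {c}) = k" using card_C c by simp
    ultimately have "det (toeplitz_minor (beta \<omega>) k (?C - {c})) = 0"
      using beta_vanishes by (intro det_toeplitz_minor_zero_column) auto
    with det_c show False by simp
  qed
  then show H: "insert a L = insert (c - int k) (shift J 1)"
    by (auto simp: L_def s_def)
  have "card (insert s (shift J 1)) = Suc (nat a)"
    using s(3) Tidx_memberD[OF J] by simp
  then have "card L = nat a"
    using a_mem Tidx_memberD(1)[OF J] by (simp add: L_def s_def)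
  moreover have "L \<subseteq> {-b..a-1}"
    using s \<open>-b \<le> s\<close> Tidx_memberD(3)[OF J] by (force simp: L_def s_def)
  ultimately show L: "L \<in> Tidx a b"
    by (simp add: Tidx_def)
  have "?C - {c} = free_cols a k L"
    using free_cols_Suc_remove[OF J L H, of k] by simp
  then have "card (free_cols a k L) = k"
    using card_C c by (metis card_Diff_singleton diff_Suc_1)
  then show "\<forall>x\<in>L. - int k \<le> x"
    using card_free_cols_iff[OF L] by simp
qed

lemma sum_transition_terms_eq_laplace_terms:
  assumes J: "J \<in> Tidx a b" and card_C: "card (free_cols a (Suc k) J) = Suc k"
  shows "(\<Sum>L\<in>Tidx a b. minor_sign k (free_cols a k L) * toeplitz_minor_det (beta \<omega>) k (free_cols a k L)
                         * Tmat \<omega> a L J)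
       = (\<Sum>c\<in>free_cols a (Suc k) J. minor_sign (Suc k) (free_cols a (Suc k) J)
            * (beta \<omega> (c - int k) * (- 1) ^ (k + card {y \<in> free_cols a (Suc k) J. y < c})
               * det (toeplitz_minor (beta \<omega>) k (free_cols a (Suc k) J - {c}))))"
    (is "sum ?g _ = sum ?h ?C")
proof -
  have above: "\<forall>x\<in>L. - int k \<le> x" if "L \<in> Tidx a b" and "?g L \<noteq> 0" for L
    using that card_free_cols_iff[of L k] by (auto simp: toeplitz_minor_det_def split: if_splits)
  have "sum ?g (Tidx a b) = sum ?g {L \<in> Tidx a b. ?g L \<noteq> 0}"
    by (rule sum.mono_neutral_right) (auto simp: finite_Tidx)
  also have "\<dots> = sum ?h {c \<in> ?C. ?h c \<noteq> 0}"
  proof (rule sum.reindex_bij_witness[where i = "\<lambda>c. insert (c - int k) (shift J 1) - {a}"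
        and j = "\<lambda>L. int k + (THE s. insert a L = insert s (shift J 1))"])
    fix L assume "L \<in> {L \<in> Tidx a b. ?g L \<noteq> 0}"
    then have L: "L \<in> Tidx a b" and g_L: "?g L \<noteq> 0" by auto
    then obtain s where H: "insert a L = insert s (shift J 1)"
      by (auto elim: Tmat_nonzero_transition)
    note above = above[OF L g_L]
    have h_g: "?h (int k + s) = ?g L"
      by (rule transition_term_eq_laplace_term[OF J L H above, symmetric])
    have "insert s (shift J 1) - {a} = L"
      by (metis H Diff_insert_absorb Tidx_not_mem_a[OF L])
    then show
      "insert (int k + (THE s. insert a L = insert s (shift J 1)) - int k) (shift J 1) - {a} = L"
      unfolding transition_index_unique[OF J L H] by simp
    from h_g g_L have "?h (int k + s) \<noteq> 0" by argo
    then show "int k + (THE s. insert a L = insert s (shift J 1)) \<in> {c \<in> ?C. ?h c \<noteq> 0}"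
      unfolding transition_index_unique[OF J L H]
      using transition_col_mem[OF J L H above] by blast
    show "?h (int k + (THE s. insert a L = insert s (shift J 1))) = ?g L"
      unfolding transition_index_unique[OF J L H] by (rule h_g)
  next
    fix c assume "c \<in> {c \<in> ?C. ?h c \<noteq> 0}"
    then have c: "c \<in> ?C" and h_c: "?h c \<noteq> 0" by auto
    define L where "L = insert (c - int k) (shift J 1) - {a}"
    have "beta \<omega> (c - int k) \<noteq> 0" and "det (toeplitz_minor (beta \<omega>) k (?C - {c})) \<noteq> 0"
      using h_c by auto
    note from_c = transition_from_free_col[OF J card_C c this, folded L_def]
    have the_L: "(THE s. insert a L = insert s (shift J 1)) = c - int k"
      by (rule transition_index_unique[OF J from_c(1,2)])
    show "int k + (THE s. insert a (insert (c - int k) (shift J 1) - {a}) = insert s (shift J 1))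
          = c"
      using the_L by (simp add: L_def)
    have "?g L = ?h c"
      using transition_term_eq_laplace_term[OF J from_c] by simp
    with h_c have "?g L \<noteq> 0" by argo
    then show "insert (c - int k) (shift J 1) - {a} \<in> {L \<in> Tidx a b. ?g L \<noteq> 0}"
      using from_c(1) unfolding L_def[symmetric] by blast
  qed
  also have "\<dots> = sum ?h ?C"
    by (rule sum.mono_neutral_left) auto
  finally show ?thesis .
qed

lemma sum_transition_terms:
  assumes J: "J \<in> Tidx a b"
  shows "(\<Sum>L\<in>Tidx a b. minor_sign k (free_cols a k L) * toeplitz_minor_det (beta \<omega>) k (free_cols a k L)
                         * Tmat \<omega> a L J)
       = minor_sign (Suc k) (free_cols a (Suc k) J)
         * toeplitz_minor_det (beta \<omega>) (Suc k) (free_cols a (Suc k) J)"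
proof (cases "card (free_cols a (Suc k) J) = Suc k")
  case True
  then show ?thesis
    using sum_transition_terms_eq_laplace_terms[OF J True]
    by (simp add: toeplitz_minor_det_def det_toeplitz_minor_Suc sum_distrib_left)
next
  case False
  then obtain y where y: "y \<in> J" "y < - int (Suc k)"
    using card_free_cols_iff[OF J, of "Suc k"] by force
  have "minor_sign k (free_cols a k L) * toeplitz_minor_det (beta \<omega>) k (free_cols a k L)
        * Tmat \<omega> a L J = 0" if L: "L \<in> Tidx a b" for L
  proof (rule ccontr)
    assume "\<not> ?thesis"
    then obtain s where H: "insert a L = insert s (shift J 1)"
      and "card (free_cols a k L) = k"
      by (auto simp: toeplitz_minor_det_def split: if_splits elim: Tmat_nonzero_transition)
    then have "\<forall>x\<in>L. - int k \<le> x" using card_free_cols_iff[OF L] by simp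
    moreover have "y + 1 \<in> insert a L" unfolding H using y by simp
    then have "y + 1 \<in> L" using y a_pos by auto
    ultimately show False using y by force
  qed
  then show ?thesis
    using False by (simp add: toeplitz_minor_det_def[of _ "Suc k"] sum.neutral)
qed

theorem matpow_Tmat_eq_minor:
  assumes "J \<in> Tidx a b"
  shows "matpow (Tidx a b) (Tmat \<omega> a) k {0..a-1} J
         = minor_sign k (free_cols a k J) * toeplitz_minor_det (beta \<omega>) k (free_cols a k J)"
  using assms
proof (induction k arbitrary: J)
  case 0
  have free_0: "free_cols a 0 J = {0..a-1} - J"
    by (auto simp: free_cols_def)
  show ?case
  proof (cases "J = {0..a-1}")
    case True
    then show ?thesis
      using free_0 by (simp add: toeplitz_minor_det_def minor_sign_def parity_sign_def toeplitz_minor_def)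
  next
    case False
    have "card {0..a-1} = card J" using Tidx_memberD[OF "0.prems"] a_pos by simp
    then have "\<not> {0..a-1} \<subseteq> J"
      using False card_subset_eq[OF Tidx_memberD(1)[OF "0.prems"]] by metis
    then have "card ({0..a-1} - J) \<noteq> 0" by auto
    then show ?thesis using False free_0 by (auto simp: toeplitz_minor_det_def)
  qed
next
  case (Suc k)
  then show ?case
    by (simp add: sum_transition_terms)
qed

end

theorem mainTheorem4:
  fixes S :: "int set" and \<omega> :: "int \<Rightarrow> 'a::field_char_0" and a b :: int and k :: nat
  assumes "finite S" and "S \<noteq> {}"
    and "a = Max S" and "a \<ge> 1"
    and "b = - Min S" and "b \<ge> 1"
    and "\<forall>s. s \<notin> S \<longrightarrow> \<omega> s = 0"
  shows "Fseq \<omega> k = matpow (Tidx a b) (Tmat \<omega> a) k {0..a-1} {0..a-1}"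
proof -
  interpret banded_weights \<omega> a b
  proof
    fix s assume "s < -b \<or> a < s"
    then have "s \<notin> S" using assms(1,3,5) by (auto dest: Max_ge Min_le)
    then show "\<omega> s = 0" using assms(7) by simp
  qed (use assms(4,6) in auto)
  have "{0..a-1} \<in> Tidx a b" and "free_cols a k {0..a-1} = {0..<int k}"
    using assms(4,6) by (auto simp: Tidx_def free_cols_def)
  then show ?thesis
    using matpow_Tmat_eq_minor[of "{0..a-1}" k]
    by (simp add: minor_sign_interval Fseq_eq_toeplitz_minor_det)
qed

end
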